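(* Let $k$ be even and $d\ge1$. For any $k$-XOR instance $\Phi$ on $n$ variables consisting of $m\ge1$ constraints on distinct tuples, and any assignment $x\in\{\pm1\}^n$, $$\Big|\mathrm{sat}_\Phi(x)-\frac12\Big|\le\frac{1}{2m}\Big[\|R^{\Phi,d}_{\mathrm{norm}}\|\cdot\sum_{I\in[n]^{kd/2}}\mathrm{hist}(I)!\Big]^{1/d}.$$
   Context: A $k$-XOR instance $\Phi$ is a set of constraints $C_{S_1},\dots,C_{S_m}$ with distinct $S_a=(s_1,\dots,s_k)\in[n]^k$, where $C_S$ is $\prod_{i=1}^kx_{s_i}=\eta_S$ with $\eta_S\in\{\pm1\}$; $\mathrm{sat}_\Phi(x)$ is the fraction of constraints satisfied by $x$. Constraint tensor: $T_S=\eta_{S}$ if $S=S_a$ for some $a$, else $0$. $\|\cdot\|$ is the spectral norm. $M^\Phi$ is the $n^{k/2}\times n^{k/2}$ matrix indexed by $[n]^{k/2}$ with $M^\Phi_{U,V}=T_{(U,V)}$ (concatenation); $S^\Phi=\frac12(M^\Phi+(M^\Phi)^\top)$. $S^{\Phi,d}$ is indexed by $[n]^{kd/2}$, tuples written as concatenations $(U_1,\dots,U_d)$ of blocks in $[n]^{k/2}$, with $S^{\Phi,d}_{(U_1,\dots,U_d),(V_1,\dots,V_d)}=\prod_{s=1}^dS^\Phi_{U_s,V_s}$. For $I=(i_1,\dots,i_q)$ and $\pi\in\mathbb{S}_q$, $\pi(I)=(i_{\pi(1)},\dots,i_{\pi(q)})$; $R^{\Phi,d}_{I,J}=\frac{1}{((kd/2)!)^2}\sum_{\pi,\sigma\in\mathbb{S}_{kd/2}}S^{\Phi,d}_{\pi(I),\sigma(J)}$.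 $\mathrm{hist}(I)=(\alpha_1,\dots,\alpha_n)$ with $\alpha_i$ the number of occurrences of $i$ in $I$, $\mathrm{hist}(I)!=\prod_i\alpha_i!$. $D_{\mathrm{hist}}$ is diagonal with $(I,I)$ entry $\sqrt{\mathrm{hist}(I)!}$, and $R^{\Phi,d}_{\mathrm{norm}}=D_{\mathrm{hist}}^{-1}R^{\Phi,d}D_{\mathrm{hist}}^{-1}$. *)

theory Defs
  imports "HOL-Analysis.Analysis" "HOL-Combinatorics.Permutations"
begin

text \<open>A k-XOR instance is a finite set C of distinct k-tuples (scopes) together
with signs eta : nat list => real taking values in {-1,1} on C.\<close>

definition tuples :: "nat \<Rightarrow> nat \<Rightarrow> nat list set" where
  "tuples n q = {I. length I = q \<and> set I \<subseteq> {..<n}}"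

definition sat :: "nat list set \<Rightarrow> (nat list \<Rightarrow> real) \<Rightarrow> (nat \<Rightarrow> real) \<Rightarrow> real" where
  "sat C eta x = real (card {S \<in> C. prod_list (map x S) = eta S}) / real (card C)"

definition ctensor :: "nat list set \<Rightarrow> (nat list \<Rightarrow> real) \<Rightarrow> nat list \<Rightarrow> real" where
  "ctensor C eta S = (if S \<in> C then eta S else 0)"

definition Mmat :: "nat list set \<Rightarrow> (nat list \<Rightarrow> real) \<Rightarrow> nat list \<Rightarrow> nat list \<Rightarrow> real" where
  "Mmat C eta U V = ctensor C eta (U @ V)"

definition Smat :: "nat list set \<Rightarrow> (nat list \<Rightarrow> real) \<Rightarrow> nat list \<Rightarrow> nat list \<Rightarrow> real" where
  "Smat C eta U V = (Mmat C eta U V + Mmat C eta V U) / 2"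

definition blk :: "nat \<Rightarrow> nat list \<Rightarrow> nat \<Rightarrow> nat list" where
  "blk h I s = take h (drop (s * h) I)"

definition Sdmat :: "nat \<Rightarrow> nat \<Rightarrow> nat list set \<Rightarrow> (nat list \<Rightarrow> real) \<Rightarrow> nat list \<Rightarrow> nat list \<Rightarrow> real" where
  "Sdmat k d C eta I J = (\<Prod>s<d. Smat C eta (blk (k div 2) I s) (blk (k div 2) J s))"

definition permtup :: "(nat \<Rightarrow> nat) \<Rightarrow> nat list \<Rightarrow> nat list" where
  "permtup p I = map (\<lambda>j. I ! p j) [0..<length I]"

definition Rdmat :: "nat \<Rightarrow> nat \<Rightarrow> nat list set \<Rightarrow> (nat list \<Rightarrow> real) \<Rightarrow> nat list \<Rightarrow> nat list \<Rightarrow> real" where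
  "Rdmat k d C eta I J =
     (\<Sum>p\<in>{p. p permutes {..<k * d div 2}}. \<Sum>q\<in>{q. q permutes {..<k * d div 2}}.
        Sdmat k d C eta (permtup p I) (permtup q J)) / (real (fact (k * d div 2)))^2"

definition histfact :: "nat \<Rightarrow> nat list \<Rightarrow> real" where
  "histfact n I = (\<Prod>i<n. real (fact (count_list I i)))"

definition Rnorm :: "nat \<Rightarrow> nat \<Rightarrow> nat \<Rightarrow> nat list set \<Rightarrow> (nat list \<Rightarrow> real) \<Rightarrow> nat list \<Rightarrow> nat list \<Rightarrow> real" where
  "Rnorm n k d C eta I J = Rdmat k d C eta I J / (sqrt (histfact n I) * sqrt (histfact n J))"

definition specnorm :: "'a set \<Rightarrow> ('a \<Rightarrow> 'a \<Rightarrow> real) \<Rightarrow> real" where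
  "specnorm A Mx = Sup {sqrt (\<Sum>I\<in>A. (\<Sum>J\<in>A. Mx I J * v J)^2) | v. (\<Sum>J\<in>A. (v J)^2) = 1}"

end

theory Submission imports Defs begin

text \<open>
Write x^S for the product of the entries of x along S and P = sum_{S in C} eta_S x^S; for
signs, sat(x) - 1/2 = P / (2m). Splitting every scope into two halves makes P the quadratic
form of M, hence of its symmetric part S, in the vector (x^U)_U, and since
x^(U @ V) = x^U x^V, the power P^d is the quadratic form of S^(d) in (x^I)_I. That vector is
invariant under permuting the positions of I, so S^(d) may be replaced by its symmetrisation R;
moving the weights sqrt(hist(I)!) of R_norm onto the vector leaves a vector of squared length
sum_I hist(I)!. The spectral norm bounds the form, and taking d-th roots gives the claim.
\<close>

definition qform :: "'a set \<Rightarrow> ('a \<Rightarrow> 'a \<Rightarrow> real) \<Rightarrow> ('a \<Rightarrow> real) \<Rightarrow> real" where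
  "qform A M z = (\<Sum>I\<in>A. \<Sum>J\<in>A. M I J * z I * z J)"

lemma finite_tuples: "finite (tuples n q)"
  unfolding tuples_def using finite_lists_length_eq[of "{..<n}" q] by (simp add: conj_commute)

lemma tuples_0: "tuples n 0 = {[]}"
  by (auto simp: tuples_def)

lemma sum_tuples_append:
  "(\<Sum>I\<in>tuples n (a + b). f I) = (\<Sum>U\<in>tuples n a. \<Sum>V\<in>tuples n b. f (U @ V))"
proof -
  have "bij_betw (\<lambda>(U, V). U @ V) (tuples n a \<times> tuples n b) (tuples n (a + b))"
    by (rule bij_betw_byWitness[where f' = "\<lambda>I. (take a I, drop a I)"])
       (auto simp: tuples_def dest: in_set_takeD in_set_dropD)
  then have "(\<Sum>I\<in>tuples n (a + b). f I) = (\<Sum>(U, V)\<in>tuples n a \<times> tuples n b. f (U @ V))"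
    by (simp add: sum.reindex_bij_betw[symmetric] case_prod_beta)
  then show ?thesis
    by (simp add: sum.cartesian_product)
qed

lemma permtup_eq_permute_list: "permtup p I = permute_list p I"
  by (simp add: permtup_def permute_list_def)

lemma permtup_inv_cancel:
  assumes "p permutes {..<length I}"
  shows "permtup (inv p) (permtup p I) = I" and "permtup p (permtup (inv p) I) = I"
  using permute_list_compose[OF permutes_inv[OF assms], of p]
    permute_list_compose[OF assms, of "inv p"] permutes_inv_o[OF assms]
  by (simp_all add: permtup_eq_permute_list)

lemma permtup_in_tuples:
  assumes "p permutes {..<q}" and "I \<in> tuples n q"
  shows "permtup p I \<in> tuples n q"
  using assms by (simp add: tuples_def permtup_eq_permute_list)

lemma bij_betw_permtup:
  assumes p: "p permutes {..<q}"
  shows "bij_betw (permtup p) (tuples n q) (tuples n q)"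
proof (rule bij_betw_byWitness[where f' = "permtup (inv p)"])
  have "p permutes {..<length I}" if "I \<in> tuples n q" for I
    using p that by (simp add: tuples_def)
  then show "\<forall>I\<in>tuples n q. permtup (inv p) (permtup p I) = I"
    and "\<forall>I\<in>tuples n q. permtup p (permtup (inv p) I) = I"
    by (simp_all add: permtup_inv_cancel)
  show "permtup p ` tuples n q \<subseteq> tuples n q" "permtup (inv p) ` tuples n q \<subseteq> tuples n q"
    using permtup_in_tuples p permutes_inv[OF p] by blast+
qed

lemma prod_list_map_permtup:
  fixes x :: "nat \<Rightarrow> 'a :: comm_monoid_mult"
  assumes "p permutes {..<length I}"
  shows "prod_list (map x (permtup p I)) = prod_list (map x I)"
proof -
  have "mset (map x (permtup p I)) = mset (map x I)"
    using assms by (simp add: permtup_eq_permute_list)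
  then show ?thesis
    by (metis prod_mset_prod_list)
qed

lemma prod_list_map_sign:
  fixes x :: "nat \<Rightarrow> 'a :: ring_1"
  assumes "\<forall>i<n. x i = 1 \<or> x i = -1" and "set S \<subseteq> {..<n}"
  shows "prod_list (map x S) = 1 \<or> prod_list (map x S) = -1"
  using assms(2)
proof (induction S)
  case (Cons i S)
  then have "x i = 1 \<or> x i = -1"
    using assms(1) by simp
  with Cons show ?case
    by auto
qed simp

lemma blk_append_0: "length U = h \<Longrightarrow> blk h (U @ I) 0 = U"
  by (simp add: blk_def)

lemma blk_append_Suc: "length U = h \<Longrightarrow> blk h (U @ I) (Suc s) = blk h I s"
  by (simp add: blk_def add.commute)

lemma qform_transpose: "qform A (\<lambda>U V. M V U) z = qform A M z"
  unfolding qform_def by (subst sum.swap) (simp add: mult_ac)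

lemma qform_symmetrize: "qform A (\<lambda>U V. (M U V + M V U) / 2) z = qform A M z"
  using qform_transpose[of A M z]
  by (simp add: qform_def sum.distrib add_divide_distrib sum_divide_distrib[symmetric]
      distrib_right)

lemma qform_rescale:
  assumes "\<And>I. s I \<noteq> 0"
  shows "qform A (\<lambda>I J. M I J / (s I * s J)) (\<lambda>I. s I * z I) = qform A M z"
  unfolding qform_def using assms by (simp add: field_simps)

lemma qform_permtup:
  assumes "p permutes {..<q}" and "r permutes {..<q}"
    and "\<And>I. I \<in> tuples n q \<Longrightarrow> z (permtup p I) = z I"
    and "\<And>J. J \<in> tuples n q \<Longrightarrow> z (permtup r J) = z J"
  shows "qform (tuples n q) (\<lambda>I J. M (permtup p I) (permtup r J)) z = qform (tuples n q) M z"
proof -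
  have "qform (tuples n q) (\<lambda>I J. M (permtup p I) (permtup r J)) z
      = (\<Sum>I\<in>tuples n q. \<Sum>J\<in>tuples n q.
           M (permtup p I) (permtup r J) * z (permtup p I) * z (permtup r J))"
    unfolding qform_def using assms(3,4) by simp
  also have "\<dots> = (\<Sum>I\<in>tuples n q. \<Sum>J\<in>tuples n q. M (permtup p I) J * z (permtup p I) * z J)"
    by (intro sum.cong refl sum.reindex_bij_betw bij_betw_permtup assms(2))
  also have "\<dots> = qform (tuples n q) M z"
    unfolding qform_def
    by (rule sum.reindex_bij_betw[OF bij_betw_permtup[OF assms(1)],
          of "\<lambda>I. \<Sum>J\<in>tuples n q. M I J * z I * z J"])
  finally show ?thesis .
qed

lemma qform_sum:
  "qform A (\<lambda>I J. \<Sum>p\<in>P. M p I J) z = (\<Sum>p\<in>P. qform A (M p) z)"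
proof -
  have "qform A (\<lambda>I J. \<Sum>p\<in>P. M p I J) z = (\<Sum>I\<in>A. \<Sum>J\<in>A. \<Sum>p\<in>P. M p I J * z I * z J)"
    unfolding qform_def by (simp add: sum_distrib_right)
  also have "\<dots> = (\<Sum>I\<in>A. \<Sum>p\<in>P. \<Sum>J\<in>A. M p I J * z I * z J)"
    by (intro sum.cong refl sum.swap)
  also have "\<dots> = (\<Sum>p\<in>P. qform A (M p) z)"
    unfolding qform_def by (rule sum.swap)
  finally show ?thesis .
qed

lemma qform_divide: "qform A (\<lambda>I J. M I J / c) z = qform A M z / c"
  unfolding qform_def by (simp add: sum_divide_distrib)

lemma qform_permutation_average:
  assumes z: "\<And>p I. p permutes {..<q} \<Longrightarrow> I \<in> tuples n q \<Longrightarrow> z (permtup p I) = z I"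
  shows "qform (tuples n q)
      (\<lambda>I J. (\<Sum>p\<in>{p. p permutes {..<q}}. \<Sum>r\<in>{r. r permutes {..<q}}.
                M (permtup p I) (permtup r J)) / (real (fact q))\<^sup>2) z
    = qform (tuples n q) M z"
proof -
  have "qform (tuples n q) (\<lambda>I J. M (permtup p I) (permtup r J)) z = qform (tuples n q) M z"
    if "p permutes {..<q}" "r permutes {..<q}" for p r
    using that by (intro qform_permtup z)
  then show ?thesis
    using card_permutations[of "{..<q}" q]
    by (simp add: qform_divide qform_sum power2_eq_square)
qed

lemma qform_blockwise_prod_power:
  "qform (tuples n (h * d)) (\<lambda>I J. \<Prod>s<d. A (blk h I s) (blk h J s))
      (\<lambda>I. prod_list (map x I))
     = qform (tuples n h) A (\<lambda>I. prod_list (map x I)) ^ d"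
proof (induction d)
  case 0
  show ?case by (simp add: qform_def tuples_0)
next
  case (Suc d)
  let ?z = "\<lambda>I. prod_list (map x I)"
  let ?G = "\<lambda>I J. (\<Prod>s<d. A (blk h I s) (blk h J s)) * ?z I * ?z J"
  have split: "(\<Prod>s<Suc d. A (blk h (U @ I) s) (blk h (V @ J) s)) * ?z (U @ I) * ?z (V @ J)
      = (A U V * ?z U * ?z V) * ?G I J"
    if "U \<in> tuples n h" "V \<in> tuples n h" for U V I J
    using that unfolding prod.lessThan_Suc_shift
    by (simp add: blk_append_0 blk_append_Suc tuples_def)
  have "qform (tuples n (h * Suc d)) (\<lambda>I J. \<Prod>s<Suc d. A (blk h I s) (blk h J s)) ?z
      = (\<Sum>U\<in>tuples n h. \<Sum>I\<in>tuples n (h * d). \<Sum>V\<in>tuples n h. \<Sum>J\<in>tuples n (h * d).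
           (A U V * ?z U * ?z V) * ?G I J)"
    unfolding qform_def mult_Suc_right sum_tuples_append
    by (intro sum.cong refl split)
  also have "\<dots> = (\<Sum>U\<in>tuples n h. \<Sum>V\<in>tuples n h. \<Sum>I\<in>tuples n (h * d). \<Sum>J\<in>tuples n (h * d).
           (A U V * ?z U * ?z V) * ?G I J)"
    by (intro sum.cong refl sum.swap)
  also have "\<dots> = qform (tuples n h) A ?z
      * qform (tuples n (h * d)) (\<lambda>I J. \<Prod>s<d. A (blk h I s) (blk h J s)) ?z"
    unfolding qform_def by (simp only: sum_distrib_right) (simp only: sum_distrib_left)
  finally show ?case
    using Suc.IH by simp
qed

lemma bdd_above_specnorm_set:
  assumes "finite A"
  shows "bdd_above {sqrt (\<Sum>I\<in>A. (\<Sum>J\<in>A. M I J * v J)\<^sup>2) | v. (\<Sum>J\<in>A. (v J)\<^sup>2) = 1}"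
proof (rule bdd_aboveI, clarify)
  fix v :: "'a \<Rightarrow> real"
  assume v: "(\<Sum>J\<in>A. (v J)\<^sup>2) = 1"
  have "\<bar>\<Sum>J\<in>A. M I J * v J\<bar> \<le> L2_set (M I) A" for I
  proof -
    have "\<bar>\<Sum>J\<in>A. M I J * v J\<bar> \<le> (\<Sum>J\<in>A. \<bar>M I J\<bar> * \<bar>v J\<bar>)"
      using sum_abs[of "\<lambda>J. M I J * v J" A] by (simp add: abs_mult)
    also have "\<dots> \<le> L2_set (M I) A * L2_set v A"
      by (rule L2_set_mult_ineq)
    finally show ?thesis
      using v by (simp add: L2_set_def)
  qed
  then have "(\<Sum>I\<in>A. (\<Sum>J\<in>A. M I J * v J)\<^sup>2) \<le> (\<Sum>I\<in>A. (L2_set (M I) A)\<^sup>2)"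
    by (intro sum_mono) (metis abs_le_square_iff abs_of_nonneg L2_set_nonneg)
  then show "sqrt (\<Sum>I\<in>A. (\<Sum>J\<in>A. M I J * v J)\<^sup>2) \<le> sqrt (\<Sum>I\<in>A. (L2_set (M I) A)\<^sup>2)"
    by simp
qed

lemma L2_set_matrix_apply_le:
  assumes "finite A"
  shows "L2_set (\<lambda>I. \<Sum>J\<in>A. M I J * z J) A \<le> specnorm A M * L2_set z A"
proof (cases "L2_set z A = 0")
  case True
  then have "\<forall>J\<in>A. z J = 0"
    using assms by (simp add: L2_set_eq_0_iff)
  then show ?thesis
    using True by (simp add: L2_set_0')
next
  case False
  define c where "c = L2_set z A"
  have c: "c > 0"
    using False L2_set_nonneg[of z A] unfolding c_def by linarith
  define v where "v J = z J / c" for J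
  have "(\<Sum>J\<in>A. (v J)\<^sup>2) = (\<Sum>J\<in>A. (z J)\<^sup>2) / c\<^sup>2"
    by (simp add: v_def power_divide sum_divide_distrib)
  also have "\<dots> = 1"
    using c by (simp add: c_def L2_set_def sum_nonneg)
  finally have "L2_set (\<lambda>I. \<Sum>J\<in>A. M I J * v J) A \<le> specnorm A M"
    unfolding specnorm_def L2_set_def
    by (intro cSup_upper bdd_above_specnorm_set assms) blast
  moreover have "L2_set (\<lambda>I. \<Sum>J\<in>A. M I J * z J) A = c * L2_set (\<lambda>I. \<Sum>J\<in>A. M I J * v J) A"
    using c by (simp add: L2_set_right_distrib sum_distrib_left v_def)
  ultimately show ?thesis
    using c by (simp add: c_def mult.commute)
qed

lemma abs_qform_le_specnorm:
  assumes "finite A"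
  shows "\<bar>qform A M z\<bar> \<le> specnorm A M * (\<Sum>I\<in>A. (z I)\<^sup>2)"
proof -
  have "\<bar>qform A M z\<bar> = \<bar>\<Sum>I\<in>A. z I * (\<Sum>J\<in>A. M I J * z J)\<bar>"
    by (simp add: qform_def sum_distrib_left mult_ac)
  also have "\<dots> \<le> (\<Sum>I\<in>A. \<bar>z I\<bar> * \<bar>\<Sum>J\<in>A. M I J * z J\<bar>)"
    using sum_abs[of "\<lambda>I. z I * (\<Sum>J\<in>A. M I J * z J)" A] by (simp add: abs_mult)
  also have "\<dots> \<le> L2_set z A * L2_set (\<lambda>I. \<Sum>J\<in>A. M I J * z J) A"
    by (rule L2_set_mult_ineq)
  also have "\<dots> \<le> L2_set z A * (specnorm A M * L2_set z A)"
    by (intro mult_left_mono L2_set_matrix_apply_le assms L2_set_nonneg)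
  also have "\<dots> = specnorm A M * (\<Sum>I\<in>A. (z I)\<^sup>2)"
    by (simp add: L2_set_def sum_nonneg)
  finally show ?thesis .
qed

lemma power_le_imp_le_powr_inverse:
  fixes a b :: real
  assumes "0 \<le> a" and "a ^ d \<le> b" and "d \<ge> 1"
  shows "a \<le> b powr (1 / real d)"
proof -
  have "0 \<le> b"
    using assms(1,2) zero_le_power order_trans by blast
  have "a = root d (a ^ d)"
    using assms by (simp add: real_root_pos2)
  also have "\<dots> \<le> root d b"
    using assms by simp
  also have "\<dots> = b powr (1 / real d)"
    using assms \<open>0 \<le> b\<close> by (simp add: root_powr_inverse)
  finally show ?thesis .
qed

lemma sat_minus_half:
  assumes "card C \<noteq> 0"
    and "\<forall>S\<in>C. eta S = 1 \<or> eta S = -1"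
    and "\<forall>S\<in>C. prod_list (map x S) = 1 \<or> prod_list (map x S) = -1"
  shows "sat C eta x - 1/2 = (\<Sum>S\<in>C. eta S * prod_list (map x S)) / (2 * real (card C))"
proof -
  have "finite C"
    using assms(1) by (metis card.infinite)
  have indicator: "(if prod_list (map x S) = eta S then 1 else 0)
      = (1 + eta S * prod_list (map x S)) / 2"
    if "S \<in> C" for S
    using assms(2,3) that by force
  have "real (card {S \<in> C. prod_list (map x S) = eta S})
      = (\<Sum>S\<in>C. if prod_list (map x S) = eta S then 1 else 0)"
    using sum.inter_filter[OF \<open>finite C\<close>, of "\<lambda>_. 1 :: real"] by simp
  also have "\<dots> = (\<Sum>S\<in>C. (1 + eta S * prod_list (map x S)) / 2)"
    using indicator by (rule sum.cong[OF refl])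
  also have "\<dots> = (real (card C) + (\<Sum>S\<in>C. eta S * prod_list (map x S))) / 2"
    by (simp add: sum.distrib sum_divide_distrib[symmetric])
  finally show ?thesis
    using assms(1) unfolding sat_def by (simp add: field_simps)
qed

lemma qform_Mmat:
  assumes "C \<subseteq> tuples n (h + h)"
  shows "qform (tuples n h) (Mmat C eta) (\<lambda>I. prod_list (map x I))
    = (\<Sum>S\<in>C. eta S * prod_list (map x S))"
proof -
  have "qform (tuples n h) (Mmat C eta) (\<lambda>I. prod_list (map x I))
      = (\<Sum>S\<in>tuples n (h + h). ctensor C eta S * prod_list (map x S))"
    unfolding qform_def sum_tuples_append by (simp add: Mmat_def mult_ac)
  also have "\<dots> = (\<Sum>S\<in>C. eta S * prod_list (map x S))"
    using sum.mono_neutral_right[OF finite_tuples assms,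
        of "\<lambda>S. ctensor C eta S * prod_list (map x S)"]
    by (simp add: ctensor_def)
  finally show ?thesis .
qed

lemma qform_Smat:
  "qform A (Smat C eta) z = qform A (Mmat C eta) z"
  using qform_symmetrize[of A "Mmat C eta" z] by (simp add: Smat_def[abs_def])

lemma histfact_pos: "histfact n I > 0"
  unfolding histfact_def by (rule prod_pos) simp

lemma qform_Sdmat:
  assumes "even k"
  shows "qform (tuples n (k * d div 2)) (Sdmat k d C eta) (\<lambda>I. prod_list (map x I))
    = qform (tuples n (k div 2)) (Smat C eta) (\<lambda>I. prod_list (map x I)) ^ d"
proof -
  have "k * d div 2 = k div 2 * d"
    using assms by (auto elim!: evenE)
  then show ?thesis
    unfolding Sdmat_def[abs_def] by (simp add: qform_blockwise_prod_power)
qed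

lemma qform_Rdmat:
  "qform (tuples n (k * d div 2)) (Rdmat k d C eta) (\<lambda>I. prod_list (map x I))
    = qform (tuples n (k * d div 2)) (Sdmat k d C eta) (\<lambda>I. prod_list (map x I))"
  unfolding Rdmat_def[abs_def]
  by (rule qform_permutation_average) (simp add: tuples_def prod_list_map_permtup)

lemma qform_Rnorm:
  "qform A (Rnorm n k d C eta) (\<lambda>I. sqrt (histfact n I) * z I) = qform A (Rdmat k d C eta) z"
  unfolding Rnorm_def[abs_def]
  by (rule qform_rescale) (simp add: histfact_pos less_imp_neq[symmetric])

lemma sum_power2_sqrt_histfact_mult_sign:
  assumes "\<forall>i<n. x i = 1 \<or> x i = -1"
  shows "(\<Sum>I\<in>tuples n q. (sqrt (histfact n I) * prod_list (map x I))\<^sup>2)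
    = (\<Sum>I\<in>tuples n q. histfact n I)"
proof (intro sum.cong refl)
  fix I assume "I \<in> tuples n q"
  then have "(prod_list (map x I))\<^sup>2 = 1"
    using prod_list_map_sign[OF assms, of I] by (auto simp: tuples_def)
  then show "(sqrt (histfact n I) * prod_list (map x I))\<^sup>2 = histfact n I"
    using histfact_pos[of n I] by (simp add: power_mult_distrib)
qed

theorem mainTheorem7:
  fixes n k d :: nat and C :: "nat list set" and eta :: "nat list \<Rightarrow> real"
    and x :: "nat \<Rightarrow> real"
  assumes "even k" and "d \<ge> 1"
    and "C \<subseteq> tuples n k" and "card C \<ge> 1"
    and "\<forall>S\<in>C. eta S = 1 \<or> eta S = -1"
    and "\<forall>i<n. x i = 1 \<or> x i = -1"
  shows "\<bar>sat C eta x - 1/2\<bar> \<le>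
    (1 / (2 * real (card C))) *
      (specnorm (tuples n (k * d div 2)) (Rnorm n k d C eta)
        * (\<Sum>I\<in>tuples n (k * d div 2). histfact n I)) powr (1 / real d)"
proof -
  define T where "T = tuples n (k * d div 2)"
  define z where "z I = sqrt (histfact n I) * prod_list (map x I)" for I
  define P where "P = (\<Sum>S\<in>C. eta S * prod_list (map x S))"
  have "\<forall>S\<in>C. prod_list (map x S) = 1 \<or> prod_list (map x S) = -1"
    using assms(3) prod_list_map_sign[OF assms(6)] unfolding tuples_def by blast
  then have sat_eq: "sat C eta x - 1/2 = P / (2 * real (card C))"
    unfolding P_def using assms(4,5) by (intro sat_minus_half) auto
  have "k = k div 2 + k div 2"
    using assms(1) by auto
  then have "P ^ d = qform T (Rnorm n k d C eta) z"
    using qform_Mmat[of C n "k div 2" eta x] assms(1,3)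
    by (simp add: P_def T_def z_def[abs_def] qform_Rnorm qform_Rdmat qform_Sdmat qform_Smat)
  then have "\<bar>P\<bar> ^ d \<le> specnorm T (Rnorm n k d C eta) * (\<Sum>I\<in>T. histfact n I)"
    using abs_qform_le_specnorm[of T "Rnorm n k d C eta" z]
      sum_power2_sqrt_histfact_mult_sign[OF assms(6)]
    by (simp add: T_def z_def finite_tuples flip: power_abs)
  then have "\<bar>P\<bar> \<le> (specnorm T (Rnorm n k d C eta) * (\<Sum>I\<in>T. histfact n I)) powr (1 / real d)"
    using assms(2) by (intro power_le_imp_le_powr_inverse) auto
  then show ?thesis
    using assms(4) by (simp add: sat_eq T_def divide_right_mono)
qed

end
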